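(* Let $E$ and $M$ be PVMs on a finite-dimensional Hilbert space with $w(E)<\infty$, $w(M)=1$ and $M\ge E$, and let $\rho,\rho'$ be density operators commuting with $E$, with $\rho'$ positive definite. Then for every $a\in\mathbb{R}$, $$\mathrm{P}^M_\rho\{-\log\mathrm{P}^M_{\rho'}(\omega)\ge a\}\le\exp\Bigl(-\sup_{0\le t\le1}\bigl((a-\log w(E))t-\log\mathrm{Tr}\rho\rho'^{-t}\bigr)\Bigr).$$
   Context: $\mathrm{P}^M_\rho(\omega)=\mathrm{Tr}\rho M_\omega$. For PVMs $E=\{E_i\}$, $M=\{M_j\}$, $M\ge E$ means each $E_i$ is a sum of some $M_j$; commuting with $E$ means $\rho E_i=E_i\rho$ for all $i$; $w(E)=\sup_i\dim(\mathrm{range}\,E_i)$. *)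

theory Defs
  imports "HOL-Analysis.Analysis"
begin

definition adj :: "complex^'n^'n \<Rightarrow> complex^'n^'n" where
  "adj A = (\<chi> i j. cnj (A $ j $ i))"

definition cinner :: "complex^'n \<Rightarrow> complex^'n \<Rightarrow> complex" where
  "cinner x y = (\<Sum>i\<in>UNIV. cnj (x $ i) * y $ i)"

definition hermitian :: "complex^'n^'n \<Rightarrow> bool" where
  "hermitian A \<longleftrightarrow> adj A = A"

definition unitary :: "complex^'n^'n \<Rightarrow> bool" where
  "unitary U \<longleftrightarrow> adj U ** U = mat 1 \<and> U ** adj U = mat 1"

definition positive_semidef :: "complex^'n^'n \<Rightarrow> bool" where
  "positive_semidef A \<longleftrightarrow> hermitian A \<and> (\<forall>x. 0 \<le> Re (cinner x (A *v x)))"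

definition positive_def :: "complex^'n^'n \<Rightarrow> bool" where
  "positive_def A \<longleftrightarrow> hermitian A \<and> (\<forall>x. x \<noteq> 0 \<longrightarrow> 0 < Re (cinner x (A *v x)))"

definition density_op :: "complex^'n^'n \<Rightarrow> bool" where
  "density_op \<rho> \<longleftrightarrow> positive_semidef \<rho> \<and> trace \<rho> = 1"

definition diag_mat :: "('n \<Rightarrow> complex) \<Rightarrow> complex^'n^'n" where
  "diag_mat d = (\<chi> i j. if i = j then d i else 0)"

definition mat_rpow :: "complex^'n^'n \<Rightarrow> real \<Rightarrow> complex^'n^'n" where
  "mat_rpow A t = (SOME B. \<exists>U (d::'n \<Rightarrow> real). unitary U \<and> (\<forall>i. 0 < d i) \<and>
      A = U ** diag_mat (\<lambda>i. complex_of_real (d i)) ** adj U \<and>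
      B = U ** diag_mat (\<lambda>i. complex_of_real (d i powr t)) ** adj U)"

definition pvm :: "'i set \<Rightarrow> ('i \<Rightarrow> complex^'n^'n) \<Rightarrow> bool" where
  "pvm I E \<longleftrightarrow> finite I \<and>
     (\<forall>i\<in>I. adj (E i) = E i \<and> E i ** E i = E i) \<and>
     (\<forall>i\<in>I. \<forall>j\<in>I. i \<noteq> j \<longrightarrow> E i ** E j = 0) \<and>
     (\<Sum>i\<in>I. E i) = mat 1"

definition pvm_finer :: "'j set \<Rightarrow> ('j \<Rightarrow> complex^'n^'n) \<Rightarrow> 'i set \<Rightarrow> ('i \<Rightarrow> complex^'n^'n) \<Rightarrow> bool" where
  "pvm_finer J M I E \<longleftrightarrow> (\<forall>i\<in>I. \<exists>S\<subseteq>J. E i = (\<Sum>j\<in>S. M j))"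

definition commutes_with :: "complex^'n^'n \<Rightarrow> 'i set \<Rightarrow> ('i \<Rightarrow> complex^'n^'n) \<Rightarrow> bool" where
  "commutes_with \<rho> I E \<longleftrightarrow> (\<forall>i\<in>I. \<rho> ** E i = E i ** \<rho>)"

text \<open>\<open>w(E) = sup_i dim(range E_i)\<close>; the rank is the complex dimension of the range.\<close>
definition pvm_width :: "'i set \<Rightarrow> ('i \<Rightarrow> complex^'n^'n) \<Rightarrow> nat" where
  "pvm_width I E = Max ((\<lambda>i. rank (E i)) ` I)"

definition prob_dist :: "('j \<Rightarrow> complex^'n^'n) \<Rightarrow> complex^'n^'n \<Rightarrow> 'j \<Rightarrow> real" where
  "prob_dist M \<rho> \<omega> = Re (trace (\<rho> ** M \<omega>))"

end

(*
  Let P be the sum of the rank-one projections M_w over the outcomes w with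
  Tr(rho' M_w) <= exp(-a); the left-hand side is Re Tr(rho P).  On a rank-one projection the
  quadratic form of rho' is Tr(rho' M_w) times that of M_w.  As rho' commutes with E, its
  quadratic form splits over the blocks E_i, and each block is a sum of at most w(E) nonzero
  M_w, so convexity gives the operator inequality P rho' P <= w(E) exp(-a) P.  In an
  eigenbasis of rho', Cauchy-Schwarz together with Jensen's inequality for s |-> s^t turns
  this into P <= (w(E) exp(-a))^t rho'^(-t) for 0 <= t <= 1.  Pairing with rho gives
  Tr(rho P) <= (w(E) exp(-a))^t Tr(rho rho'^(-t)), and optimising over t is the claim.
*)
theory Submission
  imports Defs
begin

section \<open>The inner product and the adjoint\<close>

lemma cinner_add_right: "cinner x (y + z) = cinner x y + cinner x z"
  by (simp add: cinner_def distrib_left sum.distrib)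

lemma cinner_add_left: "cinner (x + y) z = cinner x z + cinner y z"
  by (simp add: cinner_def distrib_right sum.distrib)

lemma cinner_diff_right: "cinner x (y - z) = cinner x y - cinner x z"
  by (simp add: cinner_def right_diff_distrib sum_subtractf)

lemma cinner_diff_left: "cinner (x - y) z = cinner x z - cinner y z"
  by (simp add: cinner_def left_diff_distrib sum_subtractf)

lemma cinner_scale_right: "cinner x (c *s y) = c * cinner x y"
  by (simp add: cinner_def sum_distrib_left mult.left_commute)

lemma cinner_scale_left: "cinner (c *s x) y = cnj c * cinner x y"
  by (simp add: cinner_def sum_distrib_left mult.assoc)

lemma cinner_zero_right [simp]: "cinner x 0 = 0"
  by (simp add: cinner_def)

lemma cinner_zero_left [simp]: "cinner 0 x = 0"
  by (simp add: cinner_def)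

lemma cinner_sum_right: "cinner x (sum f S) = (\<Sum>i\<in>S. cinner x (f i))"
  by (induction S rule: infinite_finite_induct) (auto simp: cinner_add_right)

lemma cinner_sum_left: "cinner (sum f S) x = (\<Sum>i\<in>S. cinner (f i) x)"
  by (induction S rule: infinite_finite_induct) (auto simp: cinner_add_left)

lemma cinner_commute: "cinner y x = cnj (cinner x y)"
  by (simp add: cinner_def mult.commute)

lemma cinner_self: "cinner x x = complex_of_real (\<Sum>i\<in>UNIV. (cmod (x $ i))\<^sup>2)"
  unfolding cinner_def of_real_sum
  by (rule sum.cong) (auto simp: mult.commute intro: complex_norm_square[symmetric, unfolded of_real_power])

lemma Re_cinner_self: "Re (cinner x x) = (\<Sum>i\<in>UNIV. (cmod (x $ i))\<^sup>2)"
  by (simp add: cinner_self)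

lemma of_real_Re_cinner_self: "complex_of_real (Re (cinner x x)) = cinner x x"
  by (simp add: cinner_self)

lemma cinner_self_nonneg: "0 \<le> Re (cinner x x)"
  by (simp add: Re_cinner_self sum_nonneg)

lemma Re_cinner_self_eq_0_iff: "Re (cinner x x) = 0 \<longleftrightarrow> x = 0"
proof
  assume "Re (cinner x x) = 0"
  then have "\<forall>i\<in>UNIV. (cmod (x $ i))\<^sup>2 = 0"
    by (subst sum_nonneg_eq_0_iff[symmetric]) (auto simp: Re_cinner_self)
  then show "x = 0" by (simp add: vec_eq_iff)
qed simp

lemma Re_cinner_self_pos: "x \<noteq> 0 \<Longrightarrow> 0 < Re (cinner x x)"
  using cinner_self_nonneg[of x] Re_cinner_self_eq_0_iff[of x] by linarith

lemma power2_norm_eq_Re_cinner: "(norm x)\<^sup>2 = Re (cinner x x)"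
  by (simp add: norm_vec_def L2_set_def Re_cinner_self sum_nonneg)

lemma Re_cinner_scale_self: "Re (cinner (c *s x) (c *s x)) = (cmod c)\<^sup>2 * Re (cinner x x)"
  by (simp add: Re_cinner_self norm_mult power_mult_distrib sum_distrib_left)

lemma continuous_on_cinner_right: "continuous_on UNIV (\<lambda>x. cinner a x)"
  unfolding cinner_def by (intro continuous_intros continuous_on_component continuous_on_id)

lemma continuous_on_quadratic_form: "continuous_on UNIV (\<lambda>x. Re (cinner x (A *v x)))"
  unfolding cinner_def matrix_vector_mult_def
  by (intro continuous_intros continuous_on_component continuous_on_id continuous_on_cnj)

lemma cinner_adj: "cinner x (A *v y) = cinner (adj A *v x) y"
  by (simp add: cinner_def adj_def matrix_vector_mult_def sum_distrib_left sum_distrib_right)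
    (subst sum.swap, simp add: mult_ac)

lemma cinner_self_adjoint: "adj A = A \<Longrightarrow> cinner x (A *v y) = cinner (A *v x) y"
  by (metis cinner_adj)

lemma self_adjoint_quadratic_form_real:
  "adj A = A \<Longrightarrow> complex_of_real (Re (cinner x (A *v x))) = cinner x (A *v x)"
  by (metis cinner_adj cinner_commute Reals_cnj_iff of_real_Re)

lemma adj_sum: "adj (sum f S) = (\<Sum>i\<in>S. adj (f i))"
  by (induction S rule: infinite_finite_induct) (auto simp: adj_def vec_eq_iff)

lemma matrix_vector_mult_sum_left: "(sum f S) *v x = (\<Sum>i\<in>S. f i *v x)"
  by (induction S rule: infinite_finite_induct) (auto simp: matrix_vector_mult_add_rdistrib)

lemma matrix_vector_mult_sum_right: "A *v (sum f S) = (\<Sum>i\<in>S. A *v (f i :: 'a::comm_ring_1^'n))"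
  by (induction S rule: infinite_finite_induct) (auto simp: matrix_vector_right_distrib)

lemma matrix_vector_mult_scale: "A *v (c *s x) = c *s (A *v (x::'a::comm_ring_1^'n))"
  by (simp add: vec_eq_iff matrix_vector_mult_def sum_distrib_left mult_ac)

lemma matrix_mult_sum_right: "A ** (sum f S) = (\<Sum>i\<in>S. A ** f i)"
  by (induction S rule: infinite_finite_induct) (auto simp: matrix_add_ldistrib)

lemma matrix_mult_sum_left: "(sum f S) ** A = (\<Sum>i\<in>S. f i ** A)"
  by (induction S rule: infinite_finite_induct)
    (auto simp: vec_eq_iff matrix_matrix_mult_def sum.distrib distrib_right)

lemma trace_sum: "trace (sum f S) = (\<Sum>i\<in>S. trace (f i :: 'a::comm_ring_1^'n^'n))"
  by (induction S rule: infinite_finite_induct) (auto simp: trace_add trace_0[unfolded mat_0])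

lemma adj_mult_mult_diag_entry: "(adj U ** X ** U) $ k $ k = cinner (column k U) (X *v column k U)"
  by (simp add: adj_def matrix_matrix_mult_def cinner_def column_def matrix_vector_mult_def
      sum_distrib_left sum_distrib_right) (subst sum.swap, simp add: mult_ac)

lemma unitary_columns_orthonormal:
  assumes "unitary U"
  shows "cinner (column i U) (column j U) = (if i = j then 1 else 0)"
proof -
  have "(adj U ** U) $ i $ j = cinner (column i U) (column j U)"
    by (simp add: adj_def column_def matrix_matrix_mult_def cinner_def)
  then show ?thesis using assms by (simp add: unitary_def mat_def)
qed

lemma cinner_adj_unitary: "unitary U \<Longrightarrow> cinner (adj U *v x) (adj U *v y) = cinner x y"
  by (simp add: cinner_adj[symmetric] matrix_vector_mul_assoc unitary_def)

section \<open>Spectral theorem for self-adjoint matrices\<close>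

lemma linear_coeff_eq_0_if_quadratic_nonpos:
  fixes b c :: real
  assumes "\<And>s. b * s + c * s\<^sup>2 \<le> 0"
  shows "b = 0"
proof (rule ccontr)
  assume "b \<noteq> 0"
  define k where "k = \<bar>c\<bar> + 1"
  define s where "s = b / k"
  have "k > 0" by (simp add: k_def)
  have "0 < b\<^sup>2 / k\<^sup>2" using \<open>b \<noteq> 0\<close> \<open>k > 0\<close> by simp
  also have "b\<^sup>2 / k\<^sup>2 = b * s - (k - 1) * s\<^sup>2"
    using \<open>k > 0\<close> by (simp add: s_def field_simps power2_eq_square)
  also have "\<dots> \<le> b * s + c * s\<^sup>2"
    using mult_right_mono[of "- \<bar>c\<bar>" c "s\<^sup>2"] by (simp add: k_def)
  finally show False using assms[of s] by linarith
qed

text \<open>Perturbing \<open>x\<close> along the residual \<open>r = A x - \<lambda> x\<close> must keep the form below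
  \<open>\<lambda> \<parallel>\<cdot>\<parallel>\<^sup>2\<close>, which forces \<open>\<parallel>r\<parallel>\<^sup>2 = 0\<close>.\<close>
lemma rayleigh_maximizer_eigenvector:
  fixes A :: "complex^'n^'n"
  assumes herm: "adj A = A"
    and lin: "\<And>x y c. x \<in> W \<Longrightarrow> y \<in> W \<Longrightarrow> x + c *s y \<in> W"
    and xW: "x \<in> W" "A *v x \<in> W" and xn: "Re (cinner x x) = 1"
    and max: "\<And>v. v \<in> W \<Longrightarrow> Re (cinner v (A *v v)) \<le> Re (cinner x (A *v x)) * Re (cinner v v)"
  shows "A *v x = complex_of_real (Re (cinner x (A *v x))) *s x"
proof -
  define f where "f v = Re (cinner v (A *v v))" for v
  define l where "l = f x"
  define r where "r = A *v x - complex_of_real l *s x"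
  have "r = A *v x + complex_of_real (- l) *s x" by (simp add: r_def vector_smult_lneg)
  then have rW: "r \<in> W" using xW lin by metis
  have rr: "Re (cinner r r) = Re (cinner r (A *v x)) - l * Re (cinner r x)"
    by (simp add: r_def cinner_add_right cinner_diff_right cinner_scale_right)
  have "2 * Re (cinner r r) * s + (f r - l * Re (cinner r r)) * s\<^sup>2 \<le> 0" for s :: real
  proof -
    define v where "v = x + complex_of_real s *s r"
    have h1: "cinner x (A *v r) = cnj (cinner r (A *v x))"
      using herm by (metis cinner_self_adjoint cinner_commute)
    have h2: "cinner x r = cnj (cinner r x)" by (metis cinner_commute)
    have fv: "f v = f x + 2 * s * Re (cinner r (A *v x)) + s\<^sup>2 * f r"
      unfolding f_def v_def
      by (simp add: matrix_vector_mult_scale cinner_add_left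
          cinner_add_right cinner_scale_left cinner_scale_right h1 power2_eq_square algebra_simps)
    have nv: "Re (cinner v v) = 1 + 2 * s * Re (cinner r x) + s\<^sup>2 * Re (cinner r r)"
      unfolding v_def using xn
      by (simp add: cinner_add_left cinner_add_right cinner_scale_left cinner_scale_right h2
          power2_eq_square algebra_simps)
    have "f v \<le> l * Re (cinner v v)" using max[of v] lin[OF xW(1) rW] by (simp add: f_def l_def v_def)
    then show ?thesis unfolding fv nv rr l_def by (simp add: algebra_simps power2_eq_square)
  qed
  then have "2 * Re (cinner r r) = 0" by (rule linear_coeff_eq_0_if_quadratic_nonpos)
  then have "r = 0" using Re_cinner_self_eq_0_iff[of r] by simp
  then show ?thesis by (simp add: r_def l_def f_def)
qed

lemma self_adjoint_eigenvector_in_invariant_subspace: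
  fixes A :: "complex^'n^'n"
  assumes herm: "adj A = A" and "closed W"
    and lin: "\<And>x y c. x \<in> W \<Longrightarrow> y \<in> W \<Longrightarrow> x + c *s y \<in> W"
    and inv: "\<And>x. x \<in> W \<Longrightarrow> A *v x \<in> W"
    and x0: "x0 \<in> W" "x0 \<noteq> 0"
  shows "\<exists>v l. v \<in> W \<and> cinner v v = 1 \<and> A *v v = l *s v"
proof -
  have scale: "c *s x \<in> W" if "x \<in> W" for x c
    using lin[OF lin[OF x0(1) x0(1), of "-1"] that, of c] by simp
  define f where "f v = Re (cinner v (A *v v))" for v
  define S where "S = sphere 0 1 \<inter> W"
  have S_iff: "v \<in> S \<longleftrightarrow> v \<in> W \<and> Re (cinner v v) = 1" for v
    by (auto simp: S_def power2_norm_eq_Re_cinner[symmetric] abs_square_eq_1)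
  have normalize: "complex_of_real (1 / norm v) *s v \<in> S" if "v \<in> W" "v \<noteq> 0" for v
  proof -
    have "Re (cinner (complex_of_real (1 / norm v) *s v) (complex_of_real (1 / norm v) *s v)) = 1"
      unfolding Re_cinner_scale_self power2_norm_eq_Re_cinner[of v, symmetric]
      using that by (simp add: power_divide norm_divide)
    then show ?thesis using that scale by (simp add: S_iff)
  qed
  have "compact S" unfolding S_def using \<open>closed W\<close> by (intro compact_Int_closed compact_sphere)
  moreover have "S \<noteq> {}" using normalize[OF x0] by blast
  moreover have "continuous_on S f"
    unfolding f_def by (rule continuous_on_subset[OF continuous_on_quadratic_form]) simp
  ultimately obtain x where xS: "x \<in> S" and xmax: "\<forall>y\<in>S. f y \<le> f x"
    using continuous_attains_sup by blast
  have "f v \<le> f x * Re (cinner v v)" if "v \<in> W" for v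
  proof (cases "v = 0")
    case False
    define c where "c = complex_of_real (1 / norm v)"
    have "f (c *s v) = (cmod c)\<^sup>2 * f v"
      by (simp add: f_def matrix_vector_mult_scale cinner_scale_left cinner_scale_right
          mult.assoc[symmetric] complex_norm_square[symmetric])
    moreover have "f (c *s v) \<le> f x"
      using xmax normalize[OF that False] by (simp add: c_def)
    ultimately have "(cmod c)\<^sup>2 * f v \<le> f x" by simp
    moreover have "(cmod c)\<^sup>2 = 1 / Re (cinner v v)"
      by (simp add: c_def power2_norm_eq_Re_cinner[symmetric] power_divide norm_divide)
    ultimately show ?thesis using Re_cinner_self_pos[OF False] by (simp add: field_simps)
  qed (simp add: f_def)
  then have "A *v x = complex_of_real (f x) *s x"
    using xS inv unfolding S_iff f_def by (intro rayleigh_maximizer_eigenvector[OF herm lin]) auto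
  moreover have "cinner x x = 1" using xS of_real_Re_cinner_self[of x] by (simp add: S_iff)
  ultimately show ?thesis using xS S_iff by blast
qed

lemma exists_nonzero_orthogonal:
  fixes u :: "'n \<Rightarrow> complex^'n"
  assumes K: "K \<noteq> UNIV"
    and on: "\<forall>i\<in>K. \<forall>j\<in>K. cinner (u i) (u j) = (if i = j then 1 else 0)"
  shows "\<exists>x. x \<noteq> 0 \<and> (\<forall>i\<in>K. cinner (u i) x = 0)"
proof -
  have "card K < CARD('n)"
    using K by (intro psubset_card_mono) auto
  have "\<not> UNIV \<subseteq> vec.span (u ` K)"
  proof
    assume "UNIV \<subseteq> vec.span (u ` K)"
    then have "vec.dim (UNIV :: (complex^'n) set) \<le> card (u ` K)"
      by (intro vec.dim_le_card) auto
    also have "\<dots> \<le> card K" by (rule card_image_le) simp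
    finally show False using \<open>card K < CARD('n)\<close> unfolding vec_dim_card by simp
  qed
  then obtain e where e: "e \<notin> vec.span (u ` K)" by auto
  define x where "x = e - (\<Sum>i\<in>K. cinner (u i) e *s u i)"
  have "x \<noteq> 0"
  proof
    assume "x = 0"
    then have "e = (\<Sum>i\<in>K. cinner (u i) e *s u i)" by (simp add: x_def)
    also have "\<dots> \<in> vec.span (u ` K)"
      by (intro vec.span_sum vec.span_scale vec.span_base) auto
    finally show False using e by simp
  qed
  moreover have "cinner (u j) x = 0" if j: "j \<in> K" for j
  proof -
    have "(\<Sum>i\<in>K. cinner (u i) e * cinner (u j) (u i)) = (\<Sum>i\<in>K. if i = j then cinner (u i) e else 0)"
      by (rule sum.cong) (use on j in auto)
    then show ?thesis using j by (simp add: x_def cinner_diff_right cinner_sum_right cinner_scale_right)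
  qed
  ultimately show ?thesis by blast
qed

lemma self_adjoint_orthonormal_eigenvectors:
  fixes A :: "complex^'n^'n"
  assumes herm: "adj A = A" and "finite K"
  shows "\<exists>(u :: 'n \<Rightarrow> complex^'n) \<mu>. (\<forall>i\<in>K. \<forall>j\<in>K. cinner (u i) (u j) = (if i = j then 1 else 0))
    \<and> (\<forall>i\<in>K. A *v u i = \<mu> i *s u i)"
  using \<open>finite K\<close>
proof (induction K rule: finite_induct)
  case (insert k K)
  then obtain u \<mu> where on: "\<forall>i\<in>K. \<forall>j\<in>K. cinner (u i) (u j) = (if i = j then 1 else 0)"
    and eig: "\<forall>i\<in>K. A *v u i = \<mu> i *s u i" by blast
  define W where "W = {x. \<forall>i\<in>K. cinner (u i) x = 0}"
  have "closed W"
  proof -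
    have "W = (\<Inter>i\<in>K. {x. cinner (u i) x = 0})" by (auto simp: W_def)
    then show ?thesis
      by (auto intro!: closed_Collect_eq continuous_on_const continuous_on_cinner_right)
  qed
  moreover have "x + c *s y \<in> W" if "x \<in> W" "y \<in> W" for x y c
    using that by (simp add: W_def cinner_add_right cinner_scale_right)
  moreover have "A *v x \<in> W" if "x \<in> W" for x
    using that eig herm by (auto simp: W_def cinner_self_adjoint cinner_scale_left)
  moreover obtain x0 where "x0 \<in> W" "x0 \<noteq> 0"
    using exists_nonzero_orthogonal[OF _ on] insert.hyps(2) by (auto simp: W_def)
  ultimately obtain v l where v: "v \<in> W" "cinner v v = 1" "A *v v = l *s v"
    using self_adjoint_eigenvector_in_invariant_subspace[OF herm] by metis
  have "\<forall>i\<in>K. cinner v (u i) = 0"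
    using v(1) by (auto simp: W_def intro: cinner_commute[THEN trans])
  then have "\<forall>i\<in>insert k K. \<forall>j\<in>insert k K. cinner ((u(k := v)) i) ((u(k := v)) j) = (if i = j then 1 else 0)"
    using on v insert.hyps(2) by (auto simp: W_def)
  moreover have "\<forall>i\<in>insert k K. A *v (u(k := v)) i = (\<mu>(k := l)) i *s (u(k := v)) i"
    using eig v insert.hyps(2) by auto
  ultimately show ?case by blast
qed simp

lemma self_adjoint_spectral_decomposition:
  fixes A :: "complex^'n^'n"
  assumes herm: "adj A = A"
  shows "\<exists>U d. unitary U \<and> A = U ** diag_mat (\<lambda>i. complex_of_real (d i)) ** adj U
     \<and> (\<forall>i. complex_of_real (d i) = cinner (column i U) (A *v column i U))"
proof -
  obtain u :: "'n \<Rightarrow> complex^'n" and \<mu>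
    where on: "\<forall>i j. cinner (u i) (u j) = (if i = j then 1 else 0)" and eig: "\<forall>i. A *v u i = \<mu> i *s u i"
    using self_adjoint_orthonormal_eigenvectors[OF herm, of UNIV] by auto
  define U :: "complex^'n^'n" where "U = (\<chi> r c. u c $ r)"
  define d where "d i = Re (\<mu> i)" for i
  have col: "column i U = u i" for i by (simp add: column_def U_def vec_eq_iff)
  have UU: "adj U ** U = mat 1"
    using on by (simp add: vec_eq_iff mat_def adj_def U_def matrix_matrix_mult_def cinner_def)
  then have "U ** adj U = mat 1" using matrix_left_right_inverse by blast
  with UU have "unitary U" by (simp add: unitary_def)
  have \<mu>_eq: "\<mu> i = cinner (u i) (A *v u i)" for i
    using eig on by (simp add: cinner_scale_right)
  then have \<mu>_real: "\<mu> i = complex_of_real (d i)" for i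
    unfolding d_def using self_adjoint_quadratic_form_real[OF herm] by simp
  have "A ** U = U ** diag_mat (\<lambda>i. complex_of_real (d i))"
  proof -
    have "(U ** diag_mat (\<lambda>i. complex_of_real (d i))) $ r $ c
        = u c $ r * d c" for r c
      by (simp add: U_def matrix_matrix_mult_def diag_mat_def if_distrib cong: if_cong)
    then show ?thesis
      using eig \<mu>_real by (simp add: vec_eq_iff U_def matrix_matrix_mult_def matrix_vector_mult_def mult.commute)
  qed
  then have "A = U ** diag_mat (\<lambda>i. complex_of_real (d i)) ** adj U"
    using \<open>U ** adj U = mat 1\<close> by (metis matrix_mul_assoc matrix_mul_rid)
  with \<open>unitary U\<close> show ?thesis using \<mu>_eq \<mu>_real col by metis
qed

lemma mat_rpow_spectral:
  fixes A :: "complex^'n^'n"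
  assumes pd: "positive_def A"
  shows "\<exists>U d. unitary U \<and> (\<forall>i. 0 < d i) \<and> A = U ** diag_mat (\<lambda>i. complex_of_real (d i)) ** adj U \<and>
      mat_rpow A t = U ** diag_mat (\<lambda>i. complex_of_real (d i powr t)) ** adj U"
proof -
  have "adj A = A" using pd by (simp add: positive_def_def hermitian_def)
  then obtain U d where U: "unitary U" and A: "A = U ** diag_mat (\<lambda>i. complex_of_real (d i)) ** adj U"
    and d: "\<forall>i. complex_of_real (d i) = cinner (column i U) (A *v column i U)"
    using self_adjoint_spectral_decomposition by blast
  have "\<forall>i. 0 < d i"
  proof
    fix i
    have "column i U \<noteq> 0" using unitary_columns_orthonormal[OF U, of i i] by auto
    then show "0 < d i" using pd d by (metis Re_complex_of_real positive_def_def)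
  qed
  let ?P = "\<lambda>B. \<exists>U d. unitary U \<and> (\<forall>i. 0 < d i) \<and>
      A = U ** diag_mat (\<lambda>i. complex_of_real (d i)) ** adj U \<and>
      B = U ** diag_mat (\<lambda>i. complex_of_real (d i powr t)) ** adj U"
  have "?P (U ** diag_mat (\<lambda>i. complex_of_real (d i powr t)) ** adj U)"
    using U A \<open>\<forall>i. 0 < d i\<close> by blast
  then have "?P (SOME B. ?P B)" by (rule someI)
  then show ?thesis unfolding mat_rpow_def by simp
qed

lemma diag_mat_mult_vector_nth: "(diag_mat f *v z) $ k = f k * z $ k"
proof -
  have "(diag_mat f *v z) $ k = (\<Sum>j\<in>UNIV. if j = k then f k * z $ k else 0)"
    unfolding diag_mat_def matrix_vector_mult_def vec_lambda_beta by (rule sum.cong) auto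
  then show ?thesis by simp
qed

lemma diag_mat_mult_nth: "(diag_mat f ** Y) $ k $ l = f k * Y $ k $ l"
proof -
  have "(diag_mat f ** Y) $ k $ l = (\<Sum>j\<in>UNIV. if j = k then f k * Y $ k $ l else 0)"
    unfolding diag_mat_def matrix_matrix_mult_def vec_lambda_beta by (rule sum.cong) auto
  then show ?thesis by simp
qed

lemma quadratic_form_spectral:
  assumes "unitary U"
  shows "cinner x ((U ** diag_mat (\<lambda>i. complex_of_real (f i)) ** adj U) *v x)
     = complex_of_real (\<Sum>k\<in>UNIV. f k * (cmod ((adj U *v x) $ k))\<^sup>2)"
proof -
  define z where "z = adj U *v x"
  have "cinner x ((U ** diag_mat (\<lambda>i. complex_of_real (f i)) ** adj U) *v x)
      = cinner z (diag_mat (\<lambda>i. complex_of_real (f i)) *v z)"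
    by (simp add: z_def cinner_adj matrix_vector_mul_assoc[symmetric])
  also have "\<dots> = (\<Sum>k\<in>UNIV. complex_of_real (f k) * (cnj (z $ k) * z $ k))"
    by (simp add: cinner_def diag_mat_mult_vector_nth mult_ac)
  also have "\<dots> = complex_of_real (\<Sum>k\<in>UNIV. f k * (cmod (z $ k))\<^sup>2)"
    unfolding of_real_sum
    by (rule sum.cong) (auto simp: mult.commute intro: complex_norm_square[symmetric, unfolded of_real_power])
  finally show ?thesis by (simp add: z_def)
qed

lemma Re_trace_spectral_mult:
  "Re (trace ((V ** diag_mat (\<lambda>i. complex_of_real (e i)) ** adj V) ** X))
     = (\<Sum>k\<in>UNIV. e k * Re (cinner (column k V) (X *v column k V)))"
proof -
  have "trace ((V ** diag_mat (\<lambda>i. complex_of_real (e i)) ** adj V) ** X)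
      = trace (diag_mat (\<lambda>i. complex_of_real (e i)) ** (adj V ** X ** V))"
    by (metis matrix_mul_assoc trace_mul_sym)
  also have "\<dots> = (\<Sum>k\<in>UNIV. e k * cinner (column k V) (X *v column k V))"
    by (simp add: trace_def diag_mat_mult_nth adj_mult_mult_diag_entry)
  finally show ?thesis by simp
qed

lemma Re_trace_mult_le_if_quadratic_form_le:
  assumes "positive_semidef \<rho>" and "\<And>x. Re (cinner x (X *v x)) \<le> k * Re (cinner x (Y *v x))"
  shows "Re (trace (\<rho> ** X)) \<le> k * Re (trace (\<rho> ** Y))"
proof -
  have "adj \<rho> = \<rho>" using assms(1) by (simp add: positive_semidef_def hermitian_def)
  then obtain V e where \<rho>: "\<rho> = V ** diag_mat (\<lambda>i. complex_of_real (e i)) ** adj V"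
    and e: "\<forall>i. complex_of_real (e i) = cinner (column i V) (\<rho> *v column i V)"
    using self_adjoint_spectral_decomposition by blast
  have "0 \<le> e i" for i
    using assms(1) e by (metis Re_complex_of_real positive_semidef_def)
  then have "(\<Sum>i\<in>UNIV. e i * Re (cinner (column i V) (X *v column i V)))
      \<le> (\<Sum>i\<in>UNIV. e i * (k * Re (cinner (column i V) (Y *v column i V))))"
    by (intro sum_mono mult_left_mono assms(2))
  then show ?thesis
    unfolding \<rho> Re_trace_spectral_mult by (simp add: sum_distrib_left mult_ac)
qed

section \<open>Rank-one matrices and orthogonal idempotents\<close>

lemma row_eq_nth: "row i A = A $ i"
  by (simp add: row_def vec_eq_iff)

lemma vector_matrix_mult_sum_left: "(sum f S) v* A = (\<Sum>i\<in>S. f i v* (A :: 'a::comm_ring_1^'n^'m))"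
  by (induction S rule: infinite_finite_induct) (auto simp: vector_matrix_left_distrib)

lemma vector_matrix_mult_sum_right: "v v* (sum f S) = (\<Sum>i\<in>S. v v* (f i :: 'a::comm_ring_1^'n^'m))"
  by (induction S rule: infinite_finite_induct) (auto simp: vector_matrix_mult_add_rdistrib)

lemma vector_matrix_mult_scale: "(c *s v) v* A = c *s (v v* (A :: 'a::comm_ring_1^'n^'m))"
  by (simp add: vec_eq_iff vector_matrix_mult_def sum_distrib_left mult_ac)

lemma rank_le_1_outer_product:
  fixes M :: "'a::field^'n^'m"
  assumes "rank M \<le> 1"
  shows "\<exists>c b. \<forall>r s. M $ r $ s = c r * b $ s"
proof -
  obtain B where B: "B \<subseteq> rows M" "vec.independent B" "rows M \<subseteq> vec.span B" "card B = vec.dim (rows M)"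
    using vec.basis_exists by blast
  have "rows M = range (\<lambda>i. row i M)" by (auto simp: rows_def)
  then have "finite B" using B(1) by (metis finite finite_imageI finite_subset)
  moreover have "card B \<le> 1" using B(4) assms by (simp add: row_rank_def_gen)
  ultimately obtain b where "B \<subseteq> {b}"
    by (metis card_le_Suc0_iff_eq One_nat_def subsetI singletonI)
  have "\<exists>k. M $ r = k *s b" for r
  proof -
    have "M $ r \<in> vec.span {b}"
      using B(3) vec.span_mono[OF \<open>B \<subseteq> {b}\<close>] by (auto simp: rows_def row_eq_nth)
    then show ?thesis by (auto simp: vec.span_singleton)
  qed
  then obtain c where "\<forall>r. M $ r = c r *s b" by metis
  then show ?thesis by auto
qed

lemma rank_le_1_sandwich:
  fixes M Z :: "'a::field^'n^'n"
  assumes "rank M \<le> 1"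
  shows "(M ** Z ** M) $ r $ s = trace (Z ** M) * M $ r $ s"
proof -
  obtain c b where cb: "\<forall>r s. M $ r $ s = c r * b $ s" using rank_le_1_outer_product[OF assms] by blast
  have "(M ** Z ** M) $ r $ s = (\<Sum>l\<in>UNIV. \<Sum>k\<in>UNIV. Z $ k $ l * c l * b $ k) * (c r * b $ s)"
    by (simp add: matrix_matrix_mult_def cb sum_distrib_right sum_distrib_left mult_ac)
  also have "(\<Sum>l\<in>UNIV. \<Sum>k\<in>UNIV. Z $ k $ l * c l * b $ k) = trace (Z ** M)"
    by (simp add: trace_def matrix_matrix_mult_def cb sum_distrib_right mult_ac) (rule sum.swap)
  finally show ?thesis using cb by simp
qed

lemma rank_le_1_quadratic_form:
  fixes M Z :: "complex^'n^'n"
  assumes "rank M \<le> 1" "adj M = M"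
  shows "cinner (M *v y) (Z *v (M *v y)) = trace (Z ** M) * cinner y (M *v y)"
proof -
  have "M *v (Z *v (M *v y)) = (M ** Z ** M) *v y"
    by (simp add: matrix_vector_mul_assoc matrix_mul_assoc)
  also have "\<dots> = trace (Z ** M) *s (M *v y)"
    using rank_le_1_sandwich[OF assms(1)]
    by (simp add: vec_eq_iff matrix_vector_mult_def sum_distrib_left mult_ac)
  finally show ?thesis
    using assms(2) by (simp add: cinner_self_adjoint[symmetric] cinner_scale_right)
qed

lemma independent_if_biorthogonal:
  fixes x :: "'k \<Rightarrow> 'a::field^'n" and M :: "'k \<Rightarrow> 'a^'n^'n"
  assumes "finite K" and nz: "\<And>w. w \<in> K \<Longrightarrow> x w \<noteq> 0"
    and bi: "\<And>w w'. w \<in> K \<Longrightarrow> w' \<in> K \<Longrightarrow> x w v* M w' = (if w = w' then x w else 0)"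
  shows "inj_on x K" and "vec.independent (x ` K)"
proof -
  show inj: "inj_on x K"
  proof (rule inj_onI)
    fix w w' assume w: "w \<in> K" "w' \<in> K" and "x w = x w'"
    then have "x w' v* M w = x w" using bi[of w w] by simp
    then show "w = w'" using bi[of w' w] w nz[of w] by (metis (full_types))
  qed
  have "finite (x ` K)" using \<open>finite K\<close> by simp
  then show "vec.independent (x ` K)"
  proof (rule vec.independent_if_scalars_zero)
    fix f v assume sum0: "(\<Sum>v\<in>x ` K. f v *s v) = 0" and "v \<in> x ` K"
    from \<open>v \<in> x ` K\<close> obtain w0 where w0: "w0 \<in> K" "v = x w0" by auto
    have "(\<Sum>v\<in>x ` K. f v *s v) = (\<Sum>w\<in>K. f (x w) *s x w)"
      by (rule sum.reindex_cong[OF inj refl refl])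
    then have "0 = (\<Sum>w\<in>K. f (x w) *s x w) v* M w0" using sum0 by simp
    also have "\<dots> = (\<Sum>w\<in>K. if w = w0 then f (x w) *s x w else 0)"
      unfolding vector_matrix_mult_sum_left vector_matrix_mult_scale
      by (rule sum.cong[OF refl]) (simp add: w0 bi)
    also have "\<dots> = f (x w0) *s x w0" using w0 \<open>finite K\<close> by simp
    finally show "f v = 0" using nz[OF w0(1)] w0 by simp
  qed
qed

text \<open>A nonzero row \<open>x\<^sub>j\<close> of each nonzero \<open>M\<^sub>j\<close> satisfies \<open>x\<^sub>j M\<^sub>k = \<delta>\<^sub>j\<^sub>k x\<^sub>j\<close>, so these rows are
  independent, and they lie in the row space of the sum.\<close>
lemma card_nonzero_orthogonal_idempotents_le_rank:
  fixes M :: "'k \<Rightarrow> 'a::field^'n^'n"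
  assumes "finite T"
    and idem: "\<And>j. j \<in> T \<Longrightarrow> M j ** M j = M j"
    and orth: "\<And>j k. j \<in> T \<Longrightarrow> k \<in> T \<Longrightarrow> j \<noteq> k \<Longrightarrow> M j ** M k = 0"
  shows "card {j\<in>T. M j \<noteq> 0} \<le> rank (\<Sum>j\<in>T. M j)"
proof -
  define K where "K = {j\<in>T. M j \<noteq> 0}"
  define E where "E = (\<Sum>j\<in>T. M j)"
  have "\<forall>w\<in>K. \<exists>r. M w $ r \<noteq> 0" by (auto simp: K_def vec_eq_iff)
  then obtain r where r: "\<And>w. w \<in> K \<Longrightarrow> M w $ r w \<noteq> 0" by metis
  define x where "x w = M w $ r w" for w
  have bi: "x w v* M w' = (if w = w' then x w else 0)" if "w \<in> K" "w' \<in> T" for w w'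
  proof -
    have "x w v* M w' = (M w ** M w') $ r w"
      by (simp add: x_def vec_eq_iff matrix_matrix_mult_def vector_matrix_mult_def mult.commute)
    then show ?thesis using that idem orth by (auto simp: K_def x_def)
  qed
  then have biK: "x w v* M w' = (if w = w' then x w else 0)" if "w \<in> K" "w' \<in> K" for w w'
    using that by (simp add: K_def)
  have "finite K" using \<open>finite T\<close> by (simp add: K_def)
  have nz: "x w \<noteq> 0" if "w \<in> K" for w using r that by (simp add: x_def)
  have "x w \<in> vec.span (rows E)" if "w \<in> K" for w
  proof -
    have "x w v* E = (\<Sum>j\<in>T. if w = j then x w else 0)"
      unfolding E_def vector_matrix_mult_sum_right by (rule sum.cong) (use that bi in auto)
    then have "x w = x w v* E" using that \<open>finite T\<close> by (simp add: K_def)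
    also have "\<dots> = (\<Sum>k\<in>UNIV. x w $ k *s E $ k)"
      by (simp add: vec_eq_iff vector_matrix_mult_def mult.commute)
    also have "\<dots> \<in> vec.span (rows E)"
      by (intro vec.span_sum vec.span_scale vec.span_base) (auto simp: rows_def row_eq_nth)
    finally show ?thesis .
  qed
  then have "card (x ` K) \<le> vec.dim (vec.span (rows E))"
    using independent_if_biorthogonal(2)[OF \<open>finite K\<close> nz biK]
    by (intro vec.independent_card_le_dim) auto
  moreover have "card (x ` K) = card K"
    using independent_if_biorthogonal(1)[OF \<open>finite K\<close> nz biK] by (simp add: card_image)
  ultimately show ?thesis by (simp add: K_def E_def row_rank_def_gen)
qed

section \<open>Projection-valued measures\<close>

lemma cinner_projection:
  assumes "adj P = P" "P ** P = P"
  shows "cinner y (P *v y) = cinner (P *v y) (P *v y)"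
  using assms by (metis cinner_adj matrix_vector_mul_assoc)

lemma Re_cinner_projection_nonneg:
  assumes "adj P = P" "P ** P = P"
  shows "0 \<le> Re (cinner y (P *v y))"
  using cinner_projection[OF assms] cinner_self_nonneg by simp

lemma pvm_mult_partial_sum:
  assumes "pvm J M" "S \<subseteq> J" "j \<in> J"
  shows "M j ** (\<Sum>k\<in>S. M k) = (if j \<in> S then M j else 0)"
proof -
  have "finite S" using assms(1,2) finite_subset by (auto simp: pvm_def)
  have "M j ** (\<Sum>k\<in>S. M k) = (\<Sum>k\<in>S. if j = k then M j else 0)"
    unfolding matrix_mult_sum_right by (rule sum.cong) (use assms in \<open>auto simp: pvm_def\<close>)
  then show ?thesis using \<open>finite S\<close> by simp
qed

lemma pvm_partial_sum_projection:
  assumes "pvm J M" "S \<subseteq> J"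
  shows "adj (\<Sum>k\<in>S. M k) = (\<Sum>k\<in>S. M k)" and "(\<Sum>k\<in>S. M k) ** (\<Sum>k\<in>S. M k) = (\<Sum>k\<in>S. M k)"
proof -
  show "adj (\<Sum>k\<in>S. M k) = (\<Sum>k\<in>S. M k)"
    using assms by (auto simp: adj_sum pvm_def intro: sum.cong)
  show "(\<Sum>k\<in>S. M k) ** (\<Sum>k\<in>S. M k) = (\<Sum>k\<in>S. M k)"
    unfolding matrix_mult_sum_left
    by (rule sum.cong) (use assms pvm_mult_partial_sum[OF assms] in \<open>auto simp: subset_iff\<close>)
qed

lemma rank_le_pvm_width: "pvm I E \<Longrightarrow> i \<in> I \<Longrightarrow> rank (E i) \<le> pvm_width I E"
  by (simp add: pvm_width_def pvm_def)

lemma pvm_card_nonzero_le_rank: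
  assumes "pvm J M" "T \<subseteq> J"
  shows "card {j\<in>T. M j \<noteq> 0} \<le> rank (\<Sum>j\<in>T. M j)"
  using assms
  by (intro card_nonzero_orthogonal_idempotents_le_rank) (auto simp: pvm_def subset_iff finite_subset)

lemma quadratic_form_eq_sum_pvm_blocks:
  assumes "pvm I E" and "commutes_with R I E"
  shows "cinner y (R *v y) = (\<Sum>i\<in>I. cinner (E i *v y) (R *v (E i *v y)))"
proof -
  have E: "finite I" "\<And>i. i \<in> I \<Longrightarrow> adj (E i) = E i" "(\<Sum>i\<in>I. E i) = mat 1"
    "\<And>i j. i \<in> I \<Longrightarrow> j \<in> I \<Longrightarrow> i \<noteq> j \<Longrightarrow> E i ** E j = 0"
    using assms(1) by (auto simp: pvm_def)
  have y: "y = (\<Sum>i\<in>I. E i *v y)" by (simp add: matrix_vector_mult_sum_left[symmetric] E(3))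
  have cross: "cinner (E i *v y) (R *v (E j *v y)) = 0" if "i \<in> I" "j \<in> I" "i \<noteq> j" for i j
  proof -
    have "cinner (E i *v y) (R *v (E j *v y)) = cinner y ((E i ** R ** E j) *v y)"
      by (simp add: cinner_self_adjoint[symmetric, OF E(2)[OF that(1)]] matrix_vector_mul_assoc matrix_mul_assoc)
    also have "E i ** R ** E j = R ** (E i ** E j)"
      using assms(2) that by (simp add: commutes_with_def matrix_mul_assoc)
    finally show ?thesis using E(4)[OF that] by simp
  qed
  have "cinner y (R *v y) = (\<Sum>i\<in>I. \<Sum>j\<in>I. cinner (E i *v y) (R *v (E j *v y)))"
    by (subst (1 2) y) (simp add: matrix_vector_mult_sum_right cinner_sum_left cinner_sum_right, rule sum.swap)
  also have "\<dots> = (\<Sum>i\<in>I. \<Sum>j\<in>I. if i = j then cinner (E i *v y) (R *v (E i *v y)) else 0)"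
    by (intro sum.cong refl) (auto simp: cross)
  finally show ?thesis using E(1) by simp
qed

lemma quadratic_form_sum_le:
  assumes "positive_semidef Q" and "finite S"
  shows "Re (cinner (\<Sum>i\<in>S. z i) (Q *v (\<Sum>i\<in>S. z i)))
    \<le> real (card S) * (\<Sum>i\<in>S. Re (cinner (z i) (Q *v z i)))"
proof -
  define q where "q i = Re (cinner (z i) (Q *v z i))" for i
  have cross: "2 * Re (cinner (z a) (Q *v z b)) \<le> q a + q b" for a b
  proof -
    have "cinner (z b) (Q *v z a) = cnj (cinner (z a) (Q *v z b))"
      using assms(1) by (metis cinner_self_adjoint cinner_commute hermitian_def positive_semidef_def)
    moreover have "0 \<le> Re (cinner (z a - z b) (Q *v (z a - z b)))"
      using assms(1) by (simp add: positive_semidef_def)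
    ultimately show ?thesis
      by (simp add: q_def matrix_vector_mult_diff_distrib cinner_diff_left cinner_diff_right)
  qed
  have "Re (cinner (\<Sum>i\<in>S. z i) (Q *v (\<Sum>i\<in>S. z i))) = (\<Sum>a\<in>S. \<Sum>b\<in>S. Re (cinner (z a) (Q *v z b)))"
    by (simp add: matrix_vector_mult_sum_right cinner_sum_left cinner_sum_right) (rule sum.swap)
  also have "\<dots> \<le> (\<Sum>a\<in>S. \<Sum>b\<in>S. (q a + q b) / 2)"
    using cross by (intro sum_mono) (simp add: field_simps)
  also have "\<dots> = real (card S) * (\<Sum>i\<in>S. q i)"
    by (simp add: sum.distrib add_divide_distrib sum_divide_distrib[symmetric] sum_distrib_left[symmetric])
  finally show ?thesis by (simp add: q_def)
qed

text \<open>The form splits over the blocks \<open>E\<^sub>i\<close>, and \<open>E\<^sub>i y\<close> is a sum of at most \<open>rank E\<^sub>i\<close> nonzero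
  vectors \<open>M\<^sub>j y\<close>, which costs the factor \<open>w(E)\<close> in the convexity bound.\<close>
lemma quadratic_form_le_width:
  fixes E :: "'i \<Rightarrow> complex^'n^'n" and M :: "'j \<Rightarrow> complex^'n^'n"
  assumes pE: "pvm I E" and pM: "pvm J M" and finer: "pvm_finer J M I E"
    and R: "positive_semidef R" "commutes_with R I E"
    and bound: "\<And>j. j \<in> J \<Longrightarrow> Re (cinner (M j *v y) (R *v (M j *v y))) \<le> \<beta> * Re (cinner y (M j *v y))"
  shows "Re (cinner y (R *v y)) \<le> real (pvm_width I E) * \<beta> * Re (cinner y y)"
proof -
  let ?w = "real (pvm_width I E)"
  have block: "Re (cinner (E i *v y) (R *v (E i *v y))) \<le> ?w * \<beta> * Re (cinner y (E i *v y))"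
    if "i \<in> I" for i
  proof -
    have "\<exists>T\<subseteq>J. E i = (\<Sum>j\<in>T. M j)" using finer that by (simp add: pvm_finer_def)
    then obtain T where T: "T \<subseteq> J" "E i = (\<Sum>j\<in>T. M j)" by (elim exE conjE)
    define K where "K = {j\<in>T. M j \<noteq> 0}"
    have "finite J" using pM by (simp add: pvm_def)
    then have "finite T" using T(1) by (rule rev_finite_subset)
    then have "finite K" by (simp add: K_def)
    have EK: "E i *v v = (\<Sum>j\<in>K. M j *v v)" for v
      unfolding T(2) matrix_vector_mult_sum_left
      by (rule sum.mono_neutral_right) (auto simp: K_def \<open>finite T\<close>)
    have "card K \<le> pvm_width I E"
      using pvm_card_nonzero_le_rank[OF pM T(1)] rank_le_pvm_width[OF pE that] T(2)
      by (simp add: K_def)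
    moreover have "0 \<le> (\<Sum>j\<in>K. Re (cinner (M j *v y) (R *v (M j *v y))))"
      using R(1) by (intro sum_nonneg) (simp add: positive_semidef_def)
    ultimately have "Re (cinner (E i *v y) (R *v (E i *v y)))
        \<le> ?w * (\<Sum>j\<in>K. Re (cinner (M j *v y) (R *v (M j *v y))))"
      unfolding EK using quadratic_form_sum_le[OF R(1) \<open>finite K\<close>]
      by (meson mult_right_mono of_nat_le_iff order_trans)
    also have "\<dots> \<le> ?w * (\<Sum>j\<in>K. \<beta> * Re (cinner y (M j *v y)))"
      using T(1) by (intro mult_left_mono sum_mono bound) (auto simp: K_def)
    also have "\<dots> = ?w * \<beta> * Re (cinner y (E i *v y))"
      by (simp add: EK cinner_sum_right sum_distrib_left mult.assoc)
    finally show ?thesis .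
  qed
  have "Re (cinner y (R *v y)) = (\<Sum>i\<in>I. Re (cinner (E i *v y) (R *v (E i *v y))))"
    using quadratic_form_eq_sum_pvm_blocks[OF pE R(2), of y] by simp
  also have "\<dots> \<le> (\<Sum>i\<in>I. ?w * \<beta> * Re (cinner y (E i *v y)))"
    by (intro sum_mono block)
  also have "\<dots> = ?w * \<beta> * Re (cinner y y)"
    using pE by (simp add: pvm_def sum_distrib_left[symmetric] Re_sum[symmetric]
        cinner_sum_right[symmetric] matrix_vector_mult_sum_left[symmetric])
  finally show ?thesis .
qed

lemma compressed_quadratic_form_le_width:
  fixes E :: "'i \<Rightarrow> complex^'n^'n" and M :: "'j \<Rightarrow> complex^'n^'n"
  assumes pE: "pvm I E" and pM: "pvm J M" and finer: "pvm_finer J M I E"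
    and rank: "\<And>j. j \<in> J \<Longrightarrow> rank (M j) \<le> 1"
    and R: "positive_semidef R" "commutes_with R I E"
    and S: "S \<subseteq> J" "\<And>j. j \<in> S \<Longrightarrow> Re (trace (R ** M j)) \<le> \<beta>"
    and y: "y = (\<Sum>j\<in>S. M j) *v x"
  shows "Re (cinner y (R *v y)) \<le> real (pvm_width I E) * \<beta> * Re (cinner y y)"
proof (rule quadratic_form_le_width[OF pE pM finer R])
  fix j assume "j \<in> J"
  have "adj (M j) = M j" "M j ** M j = M j" using pM \<open>j \<in> J\<close> by (auto simp: pvm_def)
  have "M j *v y = (if j \<in> S then M j *v x else 0)"
    using pvm_mult_partial_sum[OF pM S(1) \<open>j \<in> J\<close>] by (simp add: y matrix_vector_mul_assoc)
  moreover have "cinner (M j *v y) (R *v (M j *v y))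
      = trace (R ** M j) * complex_of_real (Re (cinner y (M j *v y)))"
    using rank_le_1_quadratic_form[OF rank[OF \<open>j \<in> J\<close>] \<open>adj (M j) = M j\<close>]
      self_adjoint_quadratic_form_real[OF \<open>adj (M j) = M j\<close>] by simp
  moreover have "0 \<le> Re (cinner y (M j *v y))"
    by (rule Re_cinner_projection_nonneg) fact+
  ultimately show "Re (cinner (M j *v y) (R *v (M j *v y))) \<le> \<beta> * Re (cinner y (M j *v y))"
    using S(2) by (cases "j \<in> S") (auto intro: mult_right_mono)
qed

section \<open>From the compressed bound to negative powers\<close>

text \<open>Jensen's inequality for the concave map \<open>s \<mapsto> s powr t\<close>, via Young's inequality at the
  weighted mean of \<open>d\<close>.\<close>
lemma weighted_sum_powr_le:
  fixes p d :: "'k \<Rightarrow> real"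
  assumes "finite K" and p: "\<And>k. k \<in> K \<Longrightarrow> 0 \<le> p k" and d: "\<And>k. k \<in> K \<Longrightarrow> 0 < d k"
    and mean: "(\<Sum>k\<in>K. p k * d k) \<le> c * (\<Sum>k\<in>K. p k)" and t: "0 \<le> t" "t \<le> 1"
  shows "(\<Sum>k\<in>K. p k * d k powr t) \<le> c powr t * (\<Sum>k\<in>K. p k)"
proof (cases "\<forall>k\<in>K. p k = 0")
  case True
  then show ?thesis by simp
next
  case False
  then obtain k0 where k0: "k0 \<in> K" "0 < p k0" using p by (metis order_le_neq_trans)
  define N where "N = (\<Sum>k\<in>K. p k)"
  define m where "m = (\<Sum>k\<in>K. p k * d k) / N"
  have "p k0 \<le> N" unfolding N_def using k0 p \<open>finite K\<close> by (intro member_le_sum) auto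
  then have "0 < N" using k0 by linarith
  have "0 < p k0 * d k0" using k0 d by simp
  also have "\<dots> \<le> (\<Sum>k\<in>K. p k * d k)"
    using k0 p d \<open>finite K\<close> by (intro member_le_sum) (auto intro!: mult_nonneg_nonneg p less_imp_le[OF d])
  finally have "0 < m" using \<open>0 < N\<close> by (simp add: m_def)
  have "m \<le> c" using mean \<open>0 < N\<close> by (simp add: m_def N_def pos_divide_le_eq)
  have "p k * d k powr t \<le> m powr t * (t / m * (p k * d k) + (1 - t) * p k)" if "k \<in> K" for k
  proof -
    have "(d k / m) powr t \<le> t * (d k / m) + (1 - t)"
      using Youngs_inequality_0[of t "1 - t" "d k / m" 1] t d[OF that] \<open>0 < m\<close> by simp
    then have "d k powr t \<le> m powr t * (t * (d k / m) + (1 - t))"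
      using \<open>0 < m\<close> by (simp add: powr_divide divide_le_eq mult.commute)
    then have "p k * d k powr t \<le> p k * (m powr t * (t * (d k / m) + (1 - t)))"
      using p[OF that] by (rule mult_left_mono)
    also have "\<dots> = m powr t * (t / m * (p k * d k) + (1 - t) * p k)"
      using \<open>0 < m\<close> by (simp add: field_simps)
    finally show ?thesis .
  qed
  then have "(\<Sum>k\<in>K. p k * d k powr t) \<le> (\<Sum>k\<in>K. m powr t * (t / m * (p k * d k) + (1 - t) * p k))"
    by (rule sum_mono)
  also have "\<dots> = m powr t * (t / m * (\<Sum>k\<in>K. p k * d k) + (1 - t) * N)"
    by (simp only: N_def sum.distrib sum_distrib_left[symmetric])
  also have "(\<Sum>k\<in>K. p k * d k) = m * N" using \<open>0 < N\<close> by (simp add: m_def)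
  also have "t / m * (m * N) + (1 - t) * N = N" using \<open>0 < m\<close> by (simp add: field_simps)
  also have "m powr t * N \<le> c powr t * N" using \<open>0 < m\<close> \<open>m \<le> c\<close> \<open>0 < N\<close> t by (simp add: powr_mono2)
  finally show ?thesis by (simp add: N_def)
qed

lemma cmod_sum_cnj_mult_le:
  fixes d :: "'k \<Rightarrow> real" and u z :: "'k \<Rightarrow> complex"
  assumes "\<And>k. k \<in> K \<Longrightarrow> 0 < d k"
  shows "(cmod (\<Sum>k\<in>K. cnj (u k) * z k))\<^sup>2
    \<le> (\<Sum>k\<in>K. (cmod (u k))\<^sup>2 * d k powr t) * (\<Sum>k\<in>K. (cmod (z k))\<^sup>2 * d k powr (- t))"
proof -
  have "cmod (\<Sum>k\<in>K. cnj (u k) * z k) \<le> (\<Sum>k\<in>K. cmod (u k) * cmod (z k))"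
    by (rule order_trans[OF norm_sum]) (simp add: norm_mult)
  also have "\<dots> = (\<Sum>k\<in>K. (d k powr (t / 2) * cmod (u k)) * (d k powr (- t / 2) * cmod (z k)))"
  proof (rule sum.cong[OF refl])
    fix k assume "k \<in> K"
    then have "d k powr (t / 2) * d k powr (- t / 2) = 1" using assms[of k] by (simp add: powr_add[symmetric])
    then show "cmod (u k) * cmod (z k) = (d k powr (t / 2) * cmod (u k)) * (d k powr (- t / 2) * cmod (z k))"
      by (metis mult.assoc mult.left_commute mult_1)
  qed
  finally have "(cmod (\<Sum>k\<in>K. cnj (u k) * z k))\<^sup>2
      \<le> (\<Sum>k\<in>K. (d k powr (t / 2) * cmod (u k)) * (d k powr (- t / 2) * cmod (z k)))\<^sup>2"
    by (rule power_mono) simp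
  also have "\<dots> \<le> (\<Sum>k\<in>K. (d k powr (t / 2) * cmod (u k))\<^sup>2) * (\<Sum>k\<in>K. (d k powr (- t / 2) * cmod (z k))\<^sup>2)"
    by (rule Cauchy_Schwarz_ineq_sum)
  also have "(\<Sum>k\<in>K. (d k powr (t / 2) * cmod (u k))\<^sup>2) = (\<Sum>k\<in>K. (cmod (u k))\<^sup>2 * d k powr t)"
    by (simp add: power_mult_distrib power2_eq_square powr_add[symmetric] mult_ac)
  also have "(\<Sum>k\<in>K. (d k powr (- t / 2) * cmod (z k))\<^sup>2) = (\<Sum>k\<in>K. (cmod (z k))\<^sup>2 * d k powr (- t))"
    by (simp add: power_mult_distrib power2_eq_square powr_add[symmetric] mult_ac)
  finally show ?thesis .
qed

text \<open>In the eigenbasis of \<open>A\<close>: Cauchy--Schwarz gives \<open>\<langle>x,Px\<rangle>\<^sup>2 \<le> \<langle>Px,A\<^sup>tPx\<rangle> \<langle>x,A\<^sup>-\<^sup>tx\<rangle>\<close>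
  and Jensen gives \<open>\<langle>Px,A\<^sup>tPx\<rangle> \<le> c\<^sup>t \<langle>x,Px\<rangle>\<close>.\<close>
lemma projection_le_mat_rpow_neg:
  assumes P: "adj P = P" "P ** P = P" and A: "positive_def A"
    and PAP: "\<And>x. Re (cinner (P *v x) (A *v (P *v x))) \<le> c * Re (cinner (P *v x) (P *v x))"
    and t: "0 \<le> t" "t \<le> 1"
  shows "Re (cinner x (P *v x)) \<le> c powr t * Re (cinner x (mat_rpow A (- t) *v x))"
proof -
  obtain U d where U: "unitary U" and d: "\<forall>i. 0 < d i"
    and A_eq: "A = U ** diag_mat (\<lambda>i. complex_of_real (d i)) ** adj U"
    and At: "mat_rpow A (- t) = U ** diag_mat (\<lambda>i. complex_of_real (d i powr (- t))) ** adj U"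
    using mat_rpow_spectral[OF A] by blast
  define u where "u = adj U *v (P *v x)"
  define z where "z = adj U *v x"
  define N where "N = Re (cinner x (P *v x))"
  have "N = Re (cinner u u)"
    using cinner_projection[OF P] cinner_adj_unitary[OF U] by (simp add: N_def u_def)
  then have N: "N = (\<Sum>k\<in>UNIV. (cmod (u $ k))\<^sup>2)" by (simp add: Re_cinner_self)
  have "(\<Sum>k\<in>UNIV. cnj (u $ k) * z $ k) = cinner (P *v x) x"
    using cinner_adj_unitary[OF U] by (simp add: u_def z_def cinner_def[symmetric])
  also have "\<dots> = cinner (P *v x) (P *v x)"
    using cinner_self_adjoint[OF P(1), of x x] cinner_projection[OF P, of x] by simp
  also have "\<dots> = complex_of_real N"
    by (simp add: N_def cinner_projection[OF P] of_real_Re_cinner_self)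
  finally have uz: "(\<Sum>k\<in>UNIV. cnj (u $ k) * z $ k) = complex_of_real N" .
  have "(\<Sum>k\<in>UNIV. d k * (cmod (u $ k))\<^sup>2) = Re (cinner (P *v x) (A *v (P *v x)))"
    by (simp add: A_eq quadratic_form_spectral[OF U] u_def)
  also have "\<dots> \<le> c * N" using PAP cinner_projection[OF P] by (simp add: N_def)
  finally have jensen: "(\<Sum>k\<in>UNIV. (cmod (u $ k))\<^sup>2 * d k powr t) \<le> c powr t * N"
    unfolding N using d t by (intro weighted_sum_powr_le) (auto simp: mult.commute)
  define R where "R = Re (cinner x (mat_rpow A (- t) *v x))"
  have R: "R = (\<Sum>k\<in>UNIV. (cmod (z $ k))\<^sup>2 * d k powr (- t))"
    by (simp add: R_def At quadratic_form_spectral[OF U] z_def mult.commute)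
  have "0 \<le> N" using Re_cinner_projection_nonneg[OF P] by (simp add: N_def)
  have "0 \<le> R" unfolding R by (simp add: sum_nonneg)
  have "N * N \<le> (\<Sum>k\<in>UNIV. (cmod (u $ k))\<^sup>2 * d k powr t) * R"
    using cmod_sum_cnj_mult_le[of UNIV d "\<lambda>k. u $ k" "\<lambda>k. z $ k" t] d
    unfolding uz R by (simp add: \<open>0 \<le> N\<close> power2_eq_square)
  also have "\<dots> \<le> (c powr t * N) * R"
    using jensen \<open>0 \<le> R\<close> by (rule mult_right_mono)
  finally have "N * N \<le> N * (c powr t * R)" by (simp add: mult_ac)
  then have "N \<le> c powr t * R"
    using \<open>0 \<le> N\<close> \<open>0 \<le> R\<close> by (cases "N = 0") (simp_all add: mult_le_cancel_left_pos)
  then show ?thesis by (simp add: N_def R_def)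
qed

section \<open>The tail bound\<close>

lemma le_exp_neg_if_le_neg_ln:
  fixes a p :: real
  assumes "a \<le> - ln p"
  shows "p \<le> exp (- a)"
proof (cases "0 < p")
  case True
  then have "p = exp (ln p)" by simp
  also have "\<dots> \<le> exp (- a)" using assms by simp
  finally show ?thesis .
qed (use exp_gt_zero[of "- a"] in linarith)

lemma le_exp_neg_SUP_if_le_powr:
  fixes L w a :: real and X :: "real \<Rightarrow> real"
  assumes "0 \<le> w" and le: "\<And>t. t \<in> {0..1} \<Longrightarrow> L \<le> (w * exp (- a)) powr t * X t"
  shows "L \<le> exp (- (SUP t\<in>{0..1}. (a - ln w) * t - ln (X t)))"
proof (cases "0 < L")
  case True
  have "(a - ln w) * t - ln (X t) \<le> - ln L" if "t \<in> {0..1}" for t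
  proof -
    have pos: "0 < (w * exp (- a)) powr t * X t" using le[OF that] True by linarith
    then have "0 < (w * exp (- a)) powr t" "0 < X t"
      using powr_ge_zero[of "w * exp (- a)" t] by (auto simp: zero_less_mult_iff)
    then have "0 < w" using \<open>0 \<le> w\<close> by (auto simp: less_le)
    have "ln L \<le> ln ((w * exp (- a)) powr t * X t)" using le[OF that] True pos by simp
    also have "\<dots> = t * (ln w - a) + ln (X t)"
      using \<open>0 < w\<close> \<open>0 < X t\<close> by (simp add: ln_mult)
    finally show ?thesis by (simp add: algebra_simps)
  qed
  then have "(SUP t\<in>{0..1}. (a - ln w) * t - ln (X t)) \<le> - ln L"
    by (intro cSUP_least) auto
  then have "exp (ln L) \<le> exp (- (SUP t\<in>{0..1}. (a - ln w) * t - ln (X t)))" by simp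
  then show ?thesis using True by simp
next
  case False
  then show ?thesis using exp_gt_zero[of "- (SUP t\<in>{0..1}. (a - ln w) * t - ln (X t))"] by linarith
qed

theorem lemma13:
  fixes I :: "'i set" and E :: "'i \<Rightarrow> complex^'n^'n"
    and J :: "'j set" and M :: "'j \<Rightarrow> complex^'n^'n"
    and \<rho> \<rho>' :: "complex^'n^'n" and a :: real
  assumes "pvm I E" and "pvm J M"
    and "pvm_width J M = 1"
    and "pvm_finer J M I E"
    and "density_op \<rho>" and "density_op \<rho>'" and "positive_def \<rho>'"
    and "commutes_with \<rho> I E" and "commutes_with \<rho>' I E"
  shows "(\<Sum>\<omega>\<in>{\<omega>\<in>J. - ln (prob_dist M \<rho>' \<omega>) \<ge> a}. prob_dist M \<rho> \<omega>)
    \<le> exp (- (SUP t\<in>{0..1::real}. (a - ln (real (pvm_width I E))) * t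
                - ln (Re (trace (\<rho> ** mat_rpow \<rho>' (- t))))))"
proof -
  define S where "S = {\<omega>\<in>J. - ln (prob_dist M \<rho>' \<omega>) \<ge> a}"
  define P where "P = (\<Sum>j\<in>S. M j)"
  define c where "c = real (pvm_width I E) * exp (- a)"
  have "S \<subseteq> J" by (auto simp: S_def)
  have P: "adj P = P" "P ** P = P"
    unfolding P_def using pvm_partial_sum_projection[OF assms(2) \<open>S \<subseteq> J\<close>] by auto
  have \<rho>: "positive_semidef \<rho>" and \<rho>': "positive_semidef \<rho>'"
    using assms(5,6) by (simp_all add: density_op_def)
  have "Re (cinner (P *v x) (\<rho>' *v (P *v x))) \<le> c * Re (cinner (P *v x) (P *v x))" for x
    unfolding c_def P_def
  proof (rule compressed_quadratic_form_le_width[OF assms(1,2,4) _ \<rho>' assms(9) \<open>S \<subseteq> J\<close>])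
    show "rank (M j) \<le> 1" if "j \<in> J" for j using rank_le_pvm_width[OF assms(2) that] assms(3) by simp
    show "Re (trace (\<rho>' ** M j)) \<le> exp (- a)" if "j \<in> S" for j
      using that by (intro le_exp_neg_if_le_neg_ln) (simp add: S_def prob_dist_def)
  qed simp
  then have "Re (trace (\<rho> ** P)) \<le> c powr t * Re (trace (\<rho> ** mat_rpow \<rho>' (- t)))"
    if "t \<in> {0..1}" for t
    using that by (intro Re_trace_mult_le_if_quadratic_form_le[OF \<rho>] projection_le_mat_rpow_neg[OF P assms(7)]) auto
  moreover have "(\<Sum>\<omega>\<in>S. prob_dist M \<rho> \<omega>) = Re (trace (\<rho> ** P))"
    by (simp add: prob_dist_def P_def matrix_mult_sum_right trace_sum)
  ultimately show ?thesis
    unfolding S_def[symmetric] by (intro le_exp_neg_SUP_if_le_powr) (auto simp: c_def)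
qed

end
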